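(* Let $\mathbf{x}_1,\dots,\mathbf{x}_N\in\mathbb{R}^d$ be strictly linearly separable, let $\hat{\mathbf{w}}=\operatorname{argmin}\|\mathbf{w}\|^2$ subject to $\mathbf{w}^\top\mathbf{x}_n\ge1$ for all $n$, let $\mathcal{S}=\{n:\hat{\mathbf{w}}^\top\mathbf{x}_n=1\}$, and let $\alpha_n\ge0$ ($n\in\mathcal{S}$) be SVM dual variables, so that $\hat{\mathbf{w}}=\sum_{n\in\mathcal{S}}\alpha_n\mathbf{x}_n$. Let $B$ be a positive integer with $K=N/B$ an integer and let $(\mathcal{B}(u))_{u\ge0}$ be minibatches of $B$ distinct indices chosen either by random sampling with replacement or by sampling without replacement. Then (almost surely in the first case, surely in the second) there exist a finite vector $\check{\mathbf{w}}\in\mathbb{R}^d$, not depending on $t$ (but possibly depending on the whole sequence of minibatch selections, including future ones), and vectors $\mathbf{m}_1(t)$ such that for all $t$ $$K\sum_{u=1}^{t-1}\frac1u\sum_{n\in\mathcal{S}\cap\mathcal{B}(u)}\alpha_n\mathbf{x}_n=\log\left(\frac tK\right)\hat{\mathbf{w}}+\check{\mathbf{w}}+\mathbf{m}_1(t),$$ where for every $\epsilon>0$, $\|\mathbf{m}_1(t)\|=o(t^{-0.5+\epsilon})$, and $\|\mathbf{m}_1(t+1)-\mathbf{m}_1(t)\|=O(t^{-1})$.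
   Context: Sampling regimes: (random sampling with replacement) at each iteration a minibatch of $B$ distinct indices is sampled randomly and uniformly, independently across iterations, so that each sample has identical probability $1/K$ of being selected; (sampling without replacement) for every $u\ge0$, $\bigcup_{k=0}^{K-1}\mathcal{B}(Ku+k)=\{1,\dots,N\}$. *)

theory Defs
  imports "HOL-Probability.Probability" "HOL-Library.Landau_Symbols"
begin

definition strictly_linearly_separable :: "nat \<Rightarrow> (nat \<Rightarrow> real^'d) \<Rightarrow> bool" where
  "strictly_linearly_separable N x \<longleftrightarrow> (\<exists>w. \<forall>n\<in>{1..N}. inner w (x n) > 0)"

definition is_max_margin :: "nat \<Rightarrow> (nat \<Rightarrow> real^'d) \<Rightarrow> real^'d \<Rightarrow> bool" where
  "is_max_margin N x wh \<longleftrightarrow> (\<forall>n\<in>{1..N}. inner wh (x n) \<ge> 1) \<and>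
     (\<forall>w. (\<forall>n\<in>{1..N}. inner w (x n) \<ge> 1) \<longrightarrow> (norm wh)\<^sup>2 \<le> (norm w)\<^sup>2)"

definition support_set :: "nat \<Rightarrow> (nat \<Rightarrow> real^'d) \<Rightarrow> real^'d \<Rightarrow> nat set" where
  "support_set N x wh = {n\<in>{1..N}. inner wh (x n) = 1}"

definition minibatches :: "nat \<Rightarrow> nat \<Rightarrow> nat set set" where
  "minibatches N B = {A. A \<subseteq> {1..N} \<and> card A = B}"

definition without_replacement :: "nat \<Rightarrow> nat \<Rightarrow> (nat \<Rightarrow> nat set) \<Rightarrow> bool" where
  "without_replacement N B bs \<longleftrightarrow> (\<forall>u. bs u \<in> minibatches N B) \<and>
     (\<forall>u. (\<Union>k<N div B. bs ((N div B) * u + k)) = {1..N})"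

definition random_sampling :: "'w measure \<Rightarrow> nat \<Rightarrow> nat \<Rightarrow> (nat \<Rightarrow> 'w \<Rightarrow> nat set) \<Rightarrow> bool" where
  "random_sampling M N B batch \<longleftrightarrow> prob_space M \<and>
     (\<forall>u. batch u \<in> measurable M (count_space UNIV)) \<and>
     prob_space.indep_vars M (\<lambda>_. count_space UNIV) batch UNIV \<and>
     (\<forall>u. distr M (count_space UNIV) (batch u) = measure_pmf (pmf_of_set (minibatches N B)))"

definition lemma5_concl ::
  "nat \<Rightarrow> (nat \<Rightarrow> real^'d) \<Rightarrow> real^'d \<Rightarrow> nat set \<Rightarrow> (nat \<Rightarrow> real) \<Rightarrow> (nat \<Rightarrow> nat set) \<Rightarrow> bool" where
  "lemma5_concl K x wh S \<alpha> bs \<longleftrightarrow>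
    (\<exists>wc::real^'d. \<exists>m1::nat \<Rightarrow> real^'d.
       (\<forall>t\<ge>1. real K *\<^sub>R (\<Sum>u=1..<t. (1 / real u) *\<^sub>R (\<Sum>n\<in>S \<inter> bs u. \<alpha> n *\<^sub>R x n))
              = ln (real t / real K) *\<^sub>R wh + wc + m1 t) \<and>
       (\<forall>\<epsilon>>0. (\<lambda>t. norm (m1 t)) \<in> o(\<lambda>t. real t powr (\<epsilon> - 1/2))) \<and>
       (\<lambda>t. norm (m1 (t + 1) - m1 t)) \<in> O(\<lambda>t. 1 / real t))"

end

theory Submission
  imports Defs "HOL-Real_Asymp.Real_Asymp"
begin

text \<open>
  Write the minibatch sum as \<open>wh / K\<close> plus the fluctuation
  \<open>d u = (\<Sum>n\<in>S. (of_bool (n \<in> \<B> u) - 1 / K) *\<^sub>R \<alpha> n *\<^sub>R x n)\<close>.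
  The partial sums of \<open>d\<close> are bounded when sampling without replacement, because every
  epoch selects each index exactly once, and they are almost surely \<open>O(T powr a)\<close> for every
  \<open>a > 1/2\<close> under random sampling, by Hoeffding's inequality and Borel--Cantelli.
  Abel summation turns this into convergence of \<open>\<Sum>u<t. d u / u\<close> to a limit at rate
  \<open>o(t powr (\<epsilon> - 1/2))\<close>, while \<open>\<Sum>u<t. 1 / u = ln t + \<gamma> + O(1/t)\<close>.
  The two limits form \<open>w\<close>, the two errors form \<open>m\<^sub>1\<close>, and
  \<open>m\<^sub>1 (t + 1) - m\<^sub>1 t = O(1/t)\<close> because each increment is a single bounded term divided by \<open>t\<close>.
\<close>

lemma powr_minus_le_telescope:
  fixes x b :: real
  assumes "x \<ge> 1" and "b > 0"
  shows "x powr (-b-1) \<le> (2 powr (b+1) / b) * (x powr (-b) - (x+1) powr (-b))"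
proof -
  have "\<forall>y. x \<le> y \<and> y \<le> x+1 \<longrightarrow> ((\<lambda>y. y powr (-b)) has_real_derivative (-b) * y powr (-b-1)) (at y)"
    using assms by (auto intro!: derivative_eq_intros simp: powr_diff field_simps)
  then obtain z where z: "x < z" "z < x+1" "(x+1) powr (-b) - x powr (-b) = (-b) * z powr (-b-1)"
    using MVT2[of x "x+1" "\<lambda>y. y powr (-b)" "\<lambda>y. (-b) * y powr (-b-1)"] by auto
  have "x powr (-b-1) = 2 powr (b+1) * (2*x) powr (-b-1)"
    using assms by (simp add: powr_mult powr_minus field_simps flip: powr_add)
  also have "\<dots> \<le> 2 powr (b+1) * z powr (-b-1)"
    using z assms by (intro mult_left_mono powr_mono2') auto
  also have "\<dots> = (2 powr (b+1) / b) * (b * z powr (-b-1))"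
    using assms by simp
  also have "b * z powr (-b-1) = x powr (-b) - (x+1) powr (-b)"
    using z(3) by simp
  finally show ?thesis .
qed

lemma powr_tail_bound:
  fixes b :: real and m :: nat
  assumes "b > 0" and "m \<ge> 1"
  shows "summable (\<lambda>k. real (m+k) powr (-b-1))"
    and "(\<Sum>k. real (m+k) powr (-b-1)) \<le> (2 powr (b+1) / b) * real m powr (-b)"
proof -
  define g where "g k = real (k+m) powr (-b)" for k
  have "g \<longlonglongrightarrow> 0"
    unfolding g_def using assms
    by (intro LIMSEQ_ignore_initial_segment tendsto_neg_powr filterlim_real_sequentially) auto
  then have telescope: "(\<lambda>k. (2 powr (b+1) / b) * (g k - g (Suc k))) sums ((2 powr (b+1) / b) * g 0)"
    using sums_mult[OF telescope_sums', of g 0 "2 powr (b+1) / b"] by simp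
  have le: "real (m+k) powr (-b-1) \<le> (2 powr (b+1) / b) * (g k - g (Suc k))" for k
    using powr_minus_le_telescope[of "real (m+k)" b] assms by (simp add: g_def add_ac)
  show summable_powr: "summable (\<lambda>k. real (m+k) powr (-b-1))"
    by (rule summable_comparison_test[OF _ sums_summable[OF telescope]]) (use le in auto)
  have "(\<Sum>k. real (m+k) powr (-b-1)) \<le> (\<Sum>k. (2 powr (b+1) / b) * (g k - g (Suc k)))"
    by (intro suminf_le le summable_powr sums_summable[OF telescope])
  also have "\<dots> = (2 powr (b+1) / b) * real m powr (-b)"
    using telescope by (simp add: sums_iff g_def)
  finally show "(\<Sum>k. real (m+k) powr (-b-1)) \<le> (2 powr (b+1) / b) * real m powr (-b)" .
qed

lemma norm_suminf_tail_le_powr: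
  fixes f :: "nat \<Rightarrow> 'a::banach"
  assumes "b > 0" and "T \<ge> 1" and bound: "\<And>u. u \<ge> T \<Longrightarrow> norm (f u) \<le> c * real u powr (-b-1)"
  shows "norm (\<Sum>k. f (k + T)) \<le> c * (2 powr (b+1) / b) * real T powr (-b)"
proof -
  have bound': "norm (f (k + T)) \<le> c * real (T + k) powr (-b-1)" for k
    using bound[of "k + T"] by (simp add: add.commute)
  have "0 \<le> c * real T powr (-b-1)"
    using bound[of T] norm_ge_zero[of "f T"] by linarith
  then have c: "c \<ge> 0"
    using assms(2) by (simp add: zero_le_mult_iff)
  have summable_powr: "summable (\<lambda>k. c * real (T + k) powr (-b-1))"
    using powr_tail_bound(1)[OF assms(1,2)] by (rule summable_mult)
  have summable_tail: "summable (\<lambda>k. norm (f (k + T)))"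
    using bound' by (intro summable_comparison_test[OF _ summable_powr]) auto
  have "norm (\<Sum>k. f (k + T)) \<le> (\<Sum>k. norm (f (k + T)))"
    using summable_tail by (rule summable_norm)
  also have "\<dots> \<le> (\<Sum>k. c * real (T + k) powr (-b-1))"
    using bound' by (intro suminf_le summable_tail summable_powr)
  also have "\<dots> = c * (\<Sum>k. real (T + k) powr (-b-1))"
    using powr_tail_bound(1)[OF assms(1,2)] by (rule suminf_mult)
  also have "\<dots> \<le> c * ((2 powr (b+1) / b) * real T powr (-b))"
    using powr_tail_bound(2)[OF assms(1,2)] c by (rule mult_left_mono)
  finally show ?thesis
    by simp
qed

lemma harmonic_summation_by_parts:
  fixes e :: "nat \<Rightarrow> 'a::real_vector"
  shows "(\<Sum>u\<in>{1..<T}. (1 / real u) *\<^sub>R e u) =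
           (1 / real T) *\<^sub>R (\<Sum>u\<in>{1..<T}. e u)
         + (\<Sum>u\<in>{1..<T}. (1 / (real u * (real u + 1))) *\<^sub>R (\<Sum>i\<in>{1..u}. e i))"
proof (induction T)
  case (Suc T)
  define F where "F n = (\<Sum>u\<in>{1..<n}. (1 / (real u * (real u + 1))) *\<^sub>R (\<Sum>i\<in>{1..u}. e i))" for n
  show ?case
  proof (cases "T = 0")
    case False
    define X where "X = (\<Sum>i\<in>{1..T}. e i)"
    have ivl: "{1..<Suc T} = insert T {1..<T}" "{1..T} = insert T {1..<T}"
      using False by auto
    have X: "X = (\<Sum>u\<in>{1..<T}. e u) + e T"
      unfolding X_def ivl(2) by (simp add: add.commute)
    have F: "F (Suc T) = (1 / (real T * (real T + 1))) *\<^sub>R X + F T"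
      unfolding F_def X_def ivl(1) by (rule sum.insert) auto
    have "1 / real T = 1 / real (Suc T) + 1 / (real T * (real T + 1))"
      using False by (simp add: divide_simps) (simp add: algebra_simps)
    then have coeff: "(1 / real T) *\<^sub>R X = (1 / real (Suc T)) *\<^sub>R X + (1 / (real T * (real T + 1))) *\<^sub>R X"
      by (metis scaleR_add_left)
    have "(\<Sum>u\<in>{1..<Suc T}. (1 / real u) *\<^sub>R e u) = (\<Sum>u\<in>{1..<T}. (1 / real u) *\<^sub>R e u) + (1 / real T) *\<^sub>R e T"
      unfolding ivl(1) by (simp add: add.commute)
    also have "\<dots> = (1 / real T) *\<^sub>R X + F T"
      using Suc.IH by (simp add: X F_def scaleR_add_right)
    also have "\<dots> = (1 / real (Suc T)) *\<^sub>R X + F (Suc T)"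
      by (simp add: coeff F)
    finally show ?thesis
      unfolding F_def X ivl(1) by (simp add: add.commute)
  qed simp
qed simp

lemma harmonic_summation_by_parts_tail:
  fixes e :: "nat \<Rightarrow> 'a::real_normed_vector"
  assumes f: "\<And>u. f u = (1 / (real u * (real u + 1))) *\<^sub>R (\<Sum>i\<in>{1..u}. e i)"
    and "summable f" and "T \<ge> 1"
  shows "(\<Sum>u\<in>{1..<T}. (1 / real u) *\<^sub>R e u) - suminf f
           = (1 / real T) *\<^sub>R (\<Sum>u\<in>{1..T - 1}. e u) - (\<Sum>k. f (k + T))"
proof -
  have "(\<Sum>u\<in>{1..<T}. (1 / real u) *\<^sub>R e u) = (1 / real T) *\<^sub>R (\<Sum>u\<in>{1..<T}. e u) + (\<Sum>u\<in>{1..<T}. f u)"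
    unfolding f by (rule harmonic_summation_by_parts)
  also have "(\<Sum>u\<in>{1..<T}. f u) = (\<Sum>u<T. f u)"
    by (rule sum.mono_neutral_left) (auto simp: f)
  also have "(\<Sum>u\<in>{1..<T}. e u) = (\<Sum>u\<in>{1..T - 1}. e u)"
    using \<open>T \<ge> 1\<close> by (intro sum.cong) auto
  also have "(\<Sum>u<T. f u) = suminf f - (\<Sum>k. f (k + T))"
    using suminf_split_initial_segment[OF \<open>summable f\<close>, of T] by simp
  finally show ?thesis
    by (simp add: algebra_simps)
qed

lemma harmonic_weighted_sum_remainder_le:
  fixes e :: "nat \<Rightarrow> 'a::banach"
  assumes f: "\<And>u. f u = (1 / (real u * (real u + 1))) *\<^sub>R (\<Sum>i\<in>{1..u}. e i)"
    and a: "0 \<le> a" "a < 1" and "T0 \<ge> 1"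
    and partial_sums: "\<And>T. T \<ge> T0 \<Longrightarrow> norm (\<Sum>u\<in>{1..T}. e u) \<le> c * real T powr a"
  shows "summable f"
    and "T \<ge> T0 + 1 \<Longrightarrow>
           norm ((\<Sum>u\<in>{1..<T}. (1 / real u) *\<^sub>R e u) - suminf f)
             \<le> c * (1 + 2 powr (2 - a) / (1 - a)) * real T powr (a - 1)"
proof -
  define S where "S T = (\<Sum>u\<in>{1..T}. e u)" for T
  have "0 \<le> c * real T0 powr a"
    using partial_sums[of T0] norm_ge_zero order_trans by blast
  then have c: "c \<ge> 0"
    using \<open>T0 \<ge> 1\<close> by (simp add: zero_le_mult_iff)
  have f_bound: "norm (f u) \<le> c * real u powr (-(1 - a) - 1)" if "u \<ge> T0" for u
  proof -
    have u: "real u \<ge> 1"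
      using that \<open>T0 \<ge> 1\<close> by simp
    have "norm (f u) = norm (S u) / (real u * (real u + 1))"
      using u by (simp add: f S_def)
    also have "\<dots> \<le> c * real u powr a / (real u powr 2)"
      using partial_sums[OF that] u c by (intro frac_le mult_mono) (auto simp: S_def powr_numeral power2_eq_square)
    also have "\<dots> = c * real u powr (-(1 - a) - 1)"
      by (simp add: powr_diff)
    finally show ?thesis .
  qed
  have "summable (\<lambda>u. norm (f u))"
  proof (rule summable_comparison_test_ev)
    show "eventually (\<lambda>u. norm (norm (f u)) \<le> c * real u powr (-(1 - a) - 1)) at_top"
      using f_bound unfolding eventually_at_top_linorder by auto
    show "summable (\<lambda>u. c * real u powr (-(1 - a) - 1))"
      using a by (intro summable_mult) (simp add: summable_real_powr_iff)
  qed
  then show "summable f"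
    by (rule summable_norm_cancel)
  assume T: "T \<ge> T0 + 1"
  then have "(\<Sum>u\<in>{1..<T}. (1 / real u) *\<^sub>R e u) - suminf f = (1 / real T) *\<^sub>R S (T - 1) - (\<Sum>k. f (k + T))"
    unfolding S_def by (intro harmonic_summation_by_parts_tail[OF f \<open>summable f\<close>]) simp
  then have "norm ((\<Sum>u\<in>{1..<T}. (1 / real u) *\<^sub>R e u) - suminf f)
               \<le> norm ((1 / real T) *\<^sub>R S (T - 1)) + norm (\<Sum>k. f (k + T))"
    by (metis norm_triangle_ineq4)
  also have "norm ((1 / real T) *\<^sub>R S (T - 1)) \<le> c * real T powr (a - 1)"
  proof -
    have "norm (S (T - 1)) \<le> c * real (T - 1) powr a"
      unfolding S_def using T by (intro partial_sums) simp
    also have "\<dots> \<le> c * real T powr a"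
      using T a c by (intro mult_left_mono powr_mono2) auto
    finally show ?thesis
      using T by (simp add: divide_right_mono powr_diff)
  qed
  also have "norm (\<Sum>k. f (k + T)) \<le> c * (2 powr (2 - a) / (1 - a)) * real T powr (a - 1)"
    using a T f_bound norm_suminf_tail_le_powr[of "1 - a" T f c] by simp
  finally show "norm ((\<Sum>u\<in>{1..<T}. (1 / real u) *\<^sub>R e u) - suminf f)
                  \<le> c * (1 + 2 powr (2 - a) / (1 - a)) * real T powr (a - 1)"
    by (simp add: algebra_simps)
qed

lemma harmonic_weighted_sum_rate:
  fixes e :: "nat \<Rightarrow> 'a::banach"
  assumes a: "0 \<le> a" "a < 1"
    and partial_sums: "(\<lambda>T. norm (\<Sum>u\<in>{1..T}. e u)) \<in> O(\<lambda>T. real T powr a)"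
  shows "\<exists>L. (\<lambda>T. \<Sum>u\<in>{1..<T}. (1 / real u) *\<^sub>R e u) \<longlonglongrightarrow> L \<and>
             (\<lambda>T. norm ((\<Sum>u\<in>{1..<T}. (1 / real u) *\<^sub>R e u) - L)) \<in> O(\<lambda>T. real T powr (a - 1))"
proof -
  obtain c T0 where T0: "T0 \<ge> 1" and partial_le: "\<And>T. T \<ge> T0 \<Longrightarrow> norm (\<Sum>u\<in>{1..T}. e u) \<le> c * real T powr a"
  proof -
    from partial_sums obtain c where "eventually (\<lambda>T. norm (\<Sum>u\<in>{1..T}. e u) \<le> c * real T powr a) at_top"
      by (auto elim!: landau_o.bigE)
    then show thesis
      using that[of "max 1 _" c] unfolding eventually_at_top_linorder by (metis max.cobounded1 max.boundedE)
  qed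
  define f where "f u = (1 / (real u * (real u + 1))) *\<^sub>R (\<Sum>i\<in>{1..u}. e i)" for u
  define P where "P T = (\<Sum>u\<in>{1..<T}. (1 / real u) *\<^sub>R e u)" for T
  define C where "C = c * (1 + 2 powr (2 - a) / (1 - a))"
  have bound: "eventually (\<lambda>T. norm (P T - suminf f) \<le> C * real T powr (a - 1)) at_top"
    using harmonic_weighted_sum_remainder_le(2)[OF f_def a T0 partial_le]
    unfolding P_def C_def eventually_at_top_linorder by blast
  moreover have "(\<lambda>T. C * real T powr (a - 1)) \<longlonglongrightarrow> 0"
    using a by (intro tendsto_mult_right_zero tendsto_neg_powr filterlim_real_sequentially) auto
  ultimately have "P \<longlonglongrightarrow> suminf f"
    by (subst Lim_null) (rule Lim_null_comparison)
  moreover have "(\<lambda>T. norm (P T - suminf f)) \<in> O(\<lambda>T. real T powr (a - 1))"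
    using bound by (intro bigoI) auto
  ultimately show ?thesis
    unfolding P_def by blast
qed

lemma harm_minus_ln_bigo:
  "(\<lambda>t. harm (t - 1) - ln (real t) - euler_mascheroni) \<in> O(\<lambda>t. 1 / real t)"
proof (intro bigoI[where c = 1] eventually_mono[OF eventually_ge_at_top[of 2]])
  fix t :: nat assume t: "t \<ge> 2"
  have "euler_mascheroni \<in> {harm (t - 1) - ln (real t) + inverse (real (2 * t)) ..
                              harm (t - 1) - ln (real t) + inverse (real (2 * (t - 1)))}"
    using euler_mascheroni_bounds[of "t - 1"] t by (simp add: of_nat_diff)
  moreover have "inverse (real (2 * (t - 1))) \<le> 1 / real t" "0 \<le> inverse (real (2 * t))"
    using t by (simp_all add: field_simps of_nat_diff)
  ultimately have "\<bar>harm (t - 1) - ln (real t) - euler_mascheroni\<bar> \<le> 1 / real t"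
    unfolding atLeastAtMost_iff abs_le_iff by linarith
  then show "norm (harm (t - 1) - ln (real t) - euler_mascheroni) \<le> 1 * norm (1 / real t)"
    by simp
qed

lemma harm_minus_ln_increment_bound:
  assumes "t \<ge> 1"
  shows "\<bar>(harm t - ln (real (t + 1))) - (harm (t - 1) - ln (real t))\<bar> \<le> 1 / real t"
proof -
  have t: "real t \<ge> 1"
    using assms by simp
  have "harm t - harm (t - 1) = (1 / real t :: real)"
    using assms by (cases t) (auto simp: harm_Suc inverse_eq_divide)
  moreover have "ln (real (t + 1)) - ln (real t) = ln (1 + 1 / real t)"
    using t by (simp add: ln_div field_simps)
  moreover have "0 \<le> ln (1 + 1 / real t)" "ln (1 + 1 / real t) \<le> 1 / real t"
    by (simp_all add: ln_add_one_self_le_self)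
  ultimately show ?thesis
    by linarith
qed

lemma harmonic_weighted_sum_limit:
  fixes e :: "nat \<Rightarrow> 'a::banach"
  assumes "\<And>a. a > 1/2 \<Longrightarrow> (\<lambda>T. norm (\<Sum>u\<in>{1..T}. e u)) \<in> O(\<lambda>T. real T powr a)"
  obtains L where "\<And>\<epsilon>. \<epsilon> > 0 \<Longrightarrow>
    (\<lambda>T. norm ((\<Sum>u\<in>{1..<T}. (1 / real u) *\<^sub>R e u) - L)) \<in> o(\<lambda>T. real T powr (\<epsilon> - 1/2))"
proof -
  define E where "E T = (\<Sum>u\<in>{1..<T}. (1 / real u) *\<^sub>R e u)" for T
  have "\<exists>L. E \<longlonglongrightarrow> L"
    using harmonic_weighted_sum_rate[of "3/4" e] assms[of "3/4"] unfolding E_def by auto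
  then obtain L where "E \<longlonglongrightarrow> L" ..
  have "(\<lambda>T. norm (E T - L)) \<in> o(\<lambda>T. real T powr (\<epsilon> - 1/2))" if "\<epsilon> > 0" for \<epsilon>
  proof -
    define a where "a = min (3/4) (1/2 + \<epsilon>/2)"
    have a: "1/2 < a" "a < 1" "a - 1 < \<epsilon> - 1/2"
      using that by (auto simp: a_def)
    obtain L' where "E \<longlonglongrightarrow> L'" and rate: "(\<lambda>T. norm (E T - L')) \<in> O(\<lambda>T. real T powr (a - 1))"
      using harmonic_weighted_sum_rate[of a e] assms[of a] a unfolding E_def by auto
    have "L' = L"
      using \<open>E \<longlonglongrightarrow> L'\<close> \<open>E \<longlonglongrightarrow> L\<close> by (rule LIMSEQ_unique)
    moreover have "(\<lambda>T. real T powr (a - 1)) \<in> o(\<lambda>T. real T powr (\<epsilon> - 1/2))"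
      using a(3) by (subst powr_smallo_iff) (auto intro: filterlim_real_sequentially)
    ultimately show ?thesis
      using landau_o.big_small_trans[OF rate] by simp
  qed
  then show thesis
    using that unfolding E_def by blast
qed

lemma harmonic_weighted_sum_expansion:
  fixes v :: "nat \<Rightarrow> 'a::banach" and c :: 'a
  assumes bounded: "\<And>u. norm (v u - c) \<le> M"
    and deviation: "\<And>a. a > 1/2 \<Longrightarrow> (\<lambda>T. norm (\<Sum>u\<in>{1..T}. v u - c)) \<in> O(\<lambda>T. real T powr a)"
  shows "\<exists>w m. (\<forall>t\<ge>1. (\<Sum>u\<in>{1..<t}. (1 / real u) *\<^sub>R v u) = ln (real t) *\<^sub>R c + w + m t) \<and>
               (\<forall>\<epsilon>>0. (\<lambda>t. norm (m t)) \<in> o(\<lambda>t. real t powr (\<epsilon> - 1/2))) \<and>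
               (\<lambda>t. norm (m (t + 1) - m t)) \<in> O(\<lambda>t. 1 / real t)"
proof -
  define E where "E t = (\<Sum>u\<in>{1..<t}. (1 / real u) *\<^sub>R (v u - c))" for t
  obtain L where E_smallo: "\<And>\<epsilon>. \<epsilon> > 0 \<Longrightarrow> (\<lambda>t. norm (E t - L)) \<in> o(\<lambda>t. real t powr (\<epsilon> - 1/2))"
    using harmonic_weighted_sum_limit[OF deviation] unfolding E_def by blast
  define h where "h t = harm (t - 1) - ln (real t) - euler_mascheroni" for t
  define m where "m t = h t *\<^sub>R c + (E t - L)" for t
  have expansion: "(\<Sum>u\<in>{1..<t}. (1 / real u) *\<^sub>R v u) = ln (real t) *\<^sub>R c + (euler_mascheroni *\<^sub>R c + L) + m t"
    if "t \<ge> 1" for t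
  proof -
    have "(\<Sum>u\<in>{1..<t}. 1 / real u) = harm (t - 1)"
      unfolding harm_def using that by (intro sum.cong) (auto simp: inverse_eq_divide)
    then have "(\<Sum>u\<in>{1..<t}. (1 / real u) *\<^sub>R v u) = E t + harm (t - 1) *\<^sub>R c"
      by (simp add: E_def scaleR_diff_right sum_subtractf scaleR_sum_left[symmetric])
    then show ?thesis
      by (simp add: m_def h_def algebra_simps)
  qed
  have small: "(\<lambda>t. norm (m t)) \<in> o(\<lambda>t. real t powr (\<epsilon> - 1/2))" if "\<epsilon> > 0" for \<epsilon>
  proof -
    have "(\<lambda>t. 1 / real t) \<in> o(\<lambda>t. real t powr (\<epsilon> - 1/2))"
      using that by real_asymp
    with harm_minus_ln_bigo have "(\<lambda>t. \<bar>h t\<bar> * norm c) \<in> o(\<lambda>t. real t powr (\<epsilon> - 1/2))"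
      unfolding h_def by (simp add: landau_o.big_small_trans)
    with E_smallo[OF that] have "(\<lambda>t. \<bar>h t\<bar> * norm c + norm (E t - L)) \<in> o(\<lambda>t. real t powr (\<epsilon> - 1/2))"
      by (intro sum_in_smallo)
    moreover have "norm (m t) \<le> \<bar>h t\<bar> * norm c + norm (E t - L)" for t
      unfolding m_def using norm_triangle_ineq[of "h t *\<^sub>R c" "E t - L"] by simp
    then have "(\<lambda>t. norm (m t)) \<in> O(\<lambda>t. \<bar>h t\<bar> * norm c + norm (E t - L))"
      by (intro bigoI[where c = 1] always_eventually) simp
    ultimately show ?thesis
      using landau_o.big_small_trans by blast
  qed
  have step: "norm (m (t + 1) - m t) \<le> (norm c + M) * (1 / real t)" if "t \<ge> 1" for t
  proof -
    have "m (t + 1) - m t = (h (t + 1) - h t) *\<^sub>R c + (1 / real t) *\<^sub>R (v t - c)"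
      using that by (simp add: m_def E_def algebra_simps)
    then have "norm (m (t + 1) - m t) \<le> \<bar>h (t + 1) - h t\<bar> * norm c + (1 / real t) * norm (v t - c)"
      using norm_triangle_ineq[of "(h (t + 1) - h t) *\<^sub>R c" "(1 / real t) *\<^sub>R (v t - c)"] by simp
    also have "\<dots> \<le> (1 / real t) * norm c + (1 / real t) * M"
      using harm_minus_ln_increment_bound[OF that] bounded[of t]
      by (intro add_mono mult_right_mono mult_left_mono) (auto simp: h_def)
    also have "\<dots> = (norm c + M) * (1 / real t)"
      by (simp add: add_divide_distrib)
    finally show ?thesis .
  qed
  have "(\<lambda>t. norm (m (t + 1) - m t)) \<in> O(\<lambda>t. 1 / real t)"
    using step by (intro bigoI[where c = "norm c + M"] eventually_mono[OF eventually_ge_at_top[of 1]]) auto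
  with expansion small show ?thesis
    by blast
qed

definition selection_deviation :: "nat \<Rightarrow> (nat \<Rightarrow> nat set) \<Rightarrow> nat \<Rightarrow> nat \<Rightarrow> real" where
  "selection_deviation K bs n T = (\<Sum>u\<in>{1..T}. of_bool (n \<in> bs u) - 1 / real K)"

lemma sum_Int_minus_scaleR_sum:
  fixes y :: "'b \<Rightarrow> 'a::real_vector"
  assumes "finite S"
  shows "(\<Sum>n\<in>S \<inter> A. y n) - r *\<^sub>R (\<Sum>n\<in>S. y n) = (\<Sum>n\<in>S. (of_bool (n \<in> A) - r) *\<^sub>R y n)"
  using assms by (simp add: scaleR_diff_left sum_subtractf scaleR_sum_right sum.inter_restrict) (intro sum.cong; simp)

lemma batch_sum_deviation_bigo:
  fixes y :: "nat \<Rightarrow> 'a::real_normed_vector"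
  assumes "finite S" and deviation: "\<And>n. n \<in> S \<Longrightarrow> (\<lambda>T. selection_deviation K bs n T) \<in> O(g)"
  shows "(\<lambda>T. norm (\<Sum>u\<in>{1..T}. (\<Sum>n\<in>S \<inter> bs u. y n) - (1 / real K) *\<^sub>R (\<Sum>n\<in>S. y n))) \<in> O(g)"
proof -
  have "(\<Sum>u\<in>{1..T}. (\<Sum>n\<in>S \<inter> bs u. y n) - (1 / real K) *\<^sub>R (\<Sum>n\<in>S. y n))
          = (\<Sum>n\<in>S. selection_deviation K bs n T *\<^sub>R y n)" for T
    using assms(1) by (simp add: sum_Int_minus_scaleR_sum selection_deviation_def scaleR_sum_left) (rule sum.swap)
  then have "norm (\<Sum>u\<in>{1..T}. (\<Sum>n\<in>S \<inter> bs u. y n) - (1 / real K) *\<^sub>R (\<Sum>n\<in>S. y n))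
          \<le> (\<Sum>n\<in>S. \<bar>selection_deviation K bs n T\<bar> * norm (y n))" for T
    using norm_sum[of "\<lambda>n. selection_deviation K bs n T *\<^sub>R y n" S] by simp
  then have "(\<lambda>T. norm (\<Sum>u\<in>{1..T}. (\<Sum>n\<in>S \<inter> bs u. y n) - (1 / real K) *\<^sub>R (\<Sum>n\<in>S. y n)))
          \<in> O(\<lambda>T. \<Sum>n\<in>S. \<bar>selection_deviation K bs n T\<bar> * norm (y n))"
    by (intro bigoI[where c = 1] always_eventually) (auto intro: order.trans[OF _ abs_ge_self])
  also have "(\<lambda>T. \<Sum>n\<in>S. \<bar>selection_deviation K bs n T\<bar> * norm (y n)) \<in> O(g)"
  proof (rule big_sum_in_bigo)
    fix n assume "n \<in> S"
    then show "(\<lambda>T. \<bar>selection_deviation K bs n T\<bar> * norm (y n)) \<in> O(g)"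
      using deviation by (cases "y n = 0") simp_all
  qed
  finally show ?thesis .
qed

lemma lemma5_concl_of_selection_deviation:
  fixes x :: "nat \<Rightarrow> real^'d"
  assumes K: "K > 0" and "finite S" and dual: "wh = (\<Sum>n\<in>S. \<alpha> n *\<^sub>R x n)"
    and deviation: "\<And>n a. n \<in> S \<Longrightarrow> a > 1/2 \<Longrightarrow> (\<lambda>T. selection_deviation K bs n T) \<in> O(\<lambda>T. real T powr a)"
  shows "lemma5_concl K x wh S \<alpha> bs"
proof -
  define v where "v u = (\<Sum>n\<in>S \<inter> bs u. \<alpha> n *\<^sub>R x n)" for u
  define c where "c = (1 / real K) *\<^sub>R wh"
  have "norm (v u - c) \<le> (\<Sum>n\<in>S. norm (\<alpha> n *\<^sub>R x n))" for u
  proof -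
    have "norm (v u - c) = norm (\<Sum>n\<in>S. (of_bool (n \<in> bs u) - 1 / real K) *\<^sub>R (\<alpha> n *\<^sub>R x n))"
      using \<open>finite S\<close> by (simp add: v_def c_def dual sum_Int_minus_scaleR_sum)
    also have "\<dots> \<le> (\<Sum>n\<in>S. \<bar>of_bool (n \<in> bs u) - 1 / real K\<bar> * norm (\<alpha> n *\<^sub>R x n))"
      by (rule order.trans[OF norm_sum]) (simp add: abs_mult mult.assoc)
    also have "\<dots> \<le> (\<Sum>n\<in>S. norm (\<alpha> n *\<^sub>R x n))"
      using K by (intro sum_mono mult_left_le_one_le) auto
    finally show ?thesis .
  qed
  moreover have "(\<lambda>T. norm (\<Sum>u\<in>{1..T}. v u - c)) \<in> O(\<lambda>T. real T powr a)" if "a > 1/2" for a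
    unfolding v_def c_def dual using \<open>finite S\<close> deviation that by (intro batch_sum_deviation_bigo)
  ultimately obtain w m where
    expansion: "\<And>t. t \<ge> 1 \<Longrightarrow> (\<Sum>u\<in>{1..<t}. (1 / real u) *\<^sub>R v u) = ln (real t) *\<^sub>R c + w + m t"
    and small: "\<And>\<epsilon>. \<epsilon> > 0 \<Longrightarrow> (\<lambda>t. norm (m t)) \<in> o(\<lambda>t. real t powr (\<epsilon> - 1/2))"
    and step: "(\<lambda>t. norm (m (t + 1) - m t)) \<in> O(\<lambda>t. 1 / real t)"
    using harmonic_weighted_sum_expansion[of v c] by blast
  have "real K *\<^sub>R (\<Sum>u\<in>{1..<t}. (1 / real u) *\<^sub>R v u)
          = ln (real t / real K) *\<^sub>R wh + (ln (real K) *\<^sub>R wh + real K *\<^sub>R w) + real K *\<^sub>R m t"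
    if "t \<ge> 1" for t
    using expansion[OF that] K that by (simp add: c_def ln_div scaleR_add_right algebra_simps)
  moreover have "(\<lambda>t. norm (real K *\<^sub>R m t)) \<in> o(\<lambda>t. real t powr (\<epsilon> - 1/2))" if "\<epsilon> > 0" for \<epsilon>
    using small[OF that] K by simp
  moreover have "(\<lambda>t. norm (real K *\<^sub>R m (t + 1) - real K *\<^sub>R m t)) \<in> O(\<lambda>t. 1 / real t)"
    using step K by (simp flip: scaleR_diff_right)
  ultimately show ?thesis
    unfolding lemma5_concl_def v_def
    by (intro exI[of _ "ln (real K) *\<^sub>R wh + real K *\<^sub>R w"] exI[of _ "\<lambda>t. real K *\<^sub>R m t"] conjI allI impI)
       simp_all
qed

lemma card_containing_eq_one_if_tight_cover:
  fixes A :: "nat \<Rightarrow> 'a set"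
  assumes "finite I" and sub: "\<And>k. k < K \<Longrightarrow> A k \<subseteq> I" and card: "\<And>k. k < K \<Longrightarrow> card (A k) = B"
    and cover: "(\<Union>k<K. A k) = I" and card_I: "card I = K * B" and "i \<in> I"
  shows "card {k. k < K \<and> i \<in> A k} = 1"
proof -
  define c where "c j = card {k. k < K \<and> j \<in> A k}" for j
  have c_sum: "c j = (\<Sum>k<K. of_bool (j \<in> A k))" for j
    by (simp add: c_def Int_def)
  have "(\<Sum>j\<in>I. c j) = (\<Sum>k<K. \<Sum>j\<in>I. of_bool (j \<in> A k))"
    unfolding c_sum by (rule sum.swap)
  also have "\<dots> = (\<Sum>k<K. card (A k))"
    using \<open>finite I\<close> sub by (intro sum.cong) (auto simp: Int_absorb1 Int_def[symmetric])
  also have "\<dots> = (\<Sum>j\<in>I. 1)"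
    using card card_I by simp
  finally have sum_eq: "(\<Sum>j\<in>I. c j) = (\<Sum>j\<in>I. 1)" .
  have pos: "1 \<le> c j" if j: "j \<in> I" for j
  proof -
    obtain k where "k < K" "j \<in> A k"
      using j cover by blast
    then have "{k. k < K \<and> j \<in> A k} \<noteq> {}"
      by blast
    then show ?thesis
      unfolding c_def by (simp add: Suc_le_eq card_gt_0_iff)
  qed
  show ?thesis
  proof (rule ccontr)
    assume "card {k. k < K \<and> i \<in> A k} \<noteq> 1"
    with pos[OF \<open>i \<in> I\<close>] have "1 < c i"
      by (simp add: c_def)
    with pos \<open>i \<in> I\<close> have "(\<Sum>j\<in>I. 1) < (\<Sum>j\<in>I. c j)"
      using \<open>finite I\<close> by (intro sum_strict_mono_ex1) auto
    with sum_eq show False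
      by simp
  qed
qed

lemma abs_partial_sum_le_if_epoch_sums_zero:
  fixes g :: "nat \<Rightarrow> real"
  assumes "K > 0" and bounded: "\<And>u. \<bar>g u\<bar> \<le> 1" and epoch: "\<And>e. (\<Sum>k<K. g (e * K + k)) = 0"
  shows "\<bar>\<Sum>u<T. g u\<bar> \<le> real K"
proof -
  define q where "q = T div K"
  have full_epochs: "(\<Sum>u<q * K. g u) = 0"
  proof -
    have "(\<Sum>u\<in>{e * K..<e * K + K}. g u) = (\<Sum>k<K. g (e * K + k))" for e
      using sum.shift_bounds_nat_ivl[of g 0 "e * K" K] by (simp add: atLeast0LessThan add.commute)
    then show ?thesis
      using sum.nat_group[of "\<lambda>e. \<Sum>u\<in>{e * K..<e * K + K}. g u"] epoch by (simp flip: sum.nat_group)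
  qed
  have "q * K \<le> T"
    by (simp add: q_def)
  then have "(\<Sum>u<T. g u) = (\<Sum>u<q * K. g u) + (\<Sum>u\<in>{q * K..<T}. g u)"
    by (simp add: atLeast0LessThan[symmetric] sum.atLeastLessThan_concat)
  then have "\<bar>\<Sum>u<T. g u\<bar> = \<bar>\<Sum>u\<in>{q * K..<T}. g u\<bar>"
    by (simp add: full_epochs)
  also have "\<dots> \<le> (\<Sum>u\<in>{q * K..<T}. 1)"
    by (rule order.trans[OF sum_abs sum_mono]) (rule bounded)
  also have "\<dots> \<le> real K"
    using \<open>K > 0\<close> by (simp add: q_def less_imp_le minus_div_mult_eq_mod)
  finally show ?thesis .
qed

lemma selection_deviation_bounded_without_replacement:
  assumes wr: "without_replacement N B bs" and B: "0 < B" "B dvd N" and n: "n \<in> {1..N}"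
  shows "\<bar>selection_deviation (N div B) bs n T\<bar> \<le> real (N div B) + 1"
proof -
  define K where "K = N div B"
  have KB: "K * B = N" and K: "K > 0"
    using B n by (auto simp: K_def div_greater_zero_iff dvd_imp_le)
  define g where "g u = of_bool (n \<in> bs u) - 1 / real K" for u
  have g_bounded: "\<bar>g u\<bar> \<le> 1" for u
    using K by (simp add: g_def)
  have "(\<Sum>k<K. g (e * K + k)) = 0" for e
  proof -
    have "card {k. k < K \<and> n \<in> bs (e * K + k)} = 1"
      using wr n KB unfolding without_replacement_def minibatches_def K_def
      by (intro card_containing_eq_one_if_tight_cover[where I = "{1..N}" and B = B]) (auto simp: mult.commute)
    then have "(\<Sum>k<K. of_bool (n \<in> bs (e * K + k)) :: real) = 1"
      by (simp add: Int_def)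
    then show ?thesis
      using K by (simp add: g_def sum_subtractf)
  qed
  \<comment> \<open>epochs start at batch \<open>0\<close>, whereas the deviation starts at batch \<open>1\<close>\<close>
  then have "\<bar>\<Sum>u<Suc T. g u\<bar> \<le> real K"
    using K g_bounded by (intro abs_partial_sum_le_if_epoch_sums_zero)
  moreover have "selection_deviation K bs n T = (\<Sum>u<Suc T. g u) - g 0"
    by (simp add: selection_deviation_def g_def lessThan_Suc_atMost atLeast0AtMost[symmetric] sum.atLeast_Suc_atMost)
  ultimately show ?thesis
    using g_bounded[of 0] unfolding K_def by linarith
qed

lemma selection_deviation_bigo_without_replacement:
  assumes "without_replacement N B bs" and "0 < B" "B dvd N" and "n \<in> {1..N}" and "a \<ge> 0"
  shows "(\<lambda>T. selection_deviation (N div B) bs n T) \<in> O(\<lambda>T. real T powr a)"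
proof (intro bigoI[where c = "real (N div B) + 1"] eventually_mono[OF eventually_ge_at_top[of 1]])
  fix T :: nat assume "T \<ge> 1"
  then have "1 \<le> real T powr a"
    using \<open>a \<ge> 0\<close> by (intro ge_one_powr_ge_zero) auto
  then show "norm (selection_deviation (N div B) bs n T) \<le> (real (N div B) + 1) * norm (real T powr a)"
    using selection_deviation_bounded_without_replacement[OF assms(1-4)]
    by (simp add: order.trans[OF _ mult_le_cancel_left1[THEN iffD2]])
qed

lemma measure_pmf_of_set_subsets_containing:
  assumes "finite I" and "i \<in> I" and "k \<le> card I"
  shows "measure (pmf_of_set {A. A \<subseteq> I \<and> card A = k}) {A. i \<in> A} = real k / real (card I)"
proof -
  define S where "S = {A. A \<subseteq> I \<and> card A = k}"
  define n where "n = card I"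
  have n: "n > 0" "k \<le> n"
    using assms by (auto simp: n_def card_gt_0_iff)
  have card_S: "card S = n choose k" and "finite S"
    using \<open>finite I\<close> by (simp_all add: S_def n_def n_subsets)
  then have "S \<noteq> {}"
    using n by auto
  have "S \<inter> {A. i \<notin> A} = {A. A \<subseteq> I - {i} \<and> card A = k}"
    by (auto simp: S_def)
  then have "card (S \<inter> {A. i \<notin> A}) = (n - 1) choose k"
    using assms by (simp add: n_subsets n_def)
  then have "measure (pmf_of_set S) {A. i \<notin> A} = real ((n - 1) choose k) / real (n choose k)"
    using \<open>S \<noteq> {}\<close> \<open>finite S\<close> card_S by (simp add: measure_pmf_of_set)
  also have "\<dots> = real (n - k) / real n"
  proof -
    have "real (n - k) * real (n choose k) = real n * real ((n - 1) choose k)"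
      using binomial_absorb_comp[of n k] by (metis of_nat_mult)
    moreover have "(n choose k) > 0"
      using n by simp
    ultimately show ?thesis
      using n by (simp add: field_simps)
  qed
  finally have "measure (pmf_of_set S) {A. i \<notin> A} = real (n - k) / real n" .
  moreover have "measure (pmf_of_set S) {A. i \<in> A} = 1 - measure (pmf_of_set S) {A. i \<notin> A}"
    using measure_pmf.prob_compl[of "{A. i \<notin> A}" "pmf_of_set S"]
    by (simp add: Compl_eq_Diff_UNIV[symmetric] Collect_neg_eq[symmetric])
  ultimately show ?thesis
    using n by (simp add: S_def n_def field_simps of_nat_diff)
qed

lemma expectation_centered_selection:
  assumes rs: "random_sampling M N B batch" and B: "0 < B" "B dvd N" and n: "n \<in> {1..N}"
  shows "prob_space.expectation M (\<lambda>\<omega>. of_bool (n \<in> batch u \<omega>) - 1 / real (N div B)) = 0"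
proof -
  define g where "g A = of_bool (n \<in> A) - 1 / real (N div B)" for A :: "nat set"
  define P where "P = pmf_of_set (minibatches N B)"
  have "batch u \<in> measurable M (count_space UNIV)" and distr: "distr M (count_space UNIV) (batch u) = measure_pmf P"
    using rs by (auto simp: random_sampling_def P_def)
  then have "integral\<^sup>L M (\<lambda>\<omega>. g (batch u \<omega>)) = measure_pmf.expectation P g"
    by (simp flip: distr add: integral_distr)
  also have "\<dots> = measure_pmf.expectation P (\<lambda>A. indicator {A. n \<in> A} A - 1 / real (N div B))"
    unfolding g_def by (intro Bochner_Integration.integral_cong) (auto simp: indicator_def)
  also have "\<dots> = measure P {A. n \<in> A} - 1 / real (N div B)"
    by (subst Bochner_Integration.integral_diff) (auto simp: less_top[symmetric])
  also have "measure P {A. n \<in> A} = real B / real N"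
    using n B unfolding P_def minibatches_def
    by (subst measure_pmf_of_set_subsets_containing) (auto simp: dvd_imp_le)
  finally show ?thesis
    using B by (simp add: g_def real_of_nat_div)
qed

lemma selection_deviation_hoeffding:
  assumes rs: "random_sampling M N B batch" and B: "0 < B" "B dvd N" and n: "n \<in> {1..N}"
    and "T \<ge> 1" and "\<epsilon> \<ge> 0"
  shows "measure M {\<omega>\<in>space M. \<epsilon> \<le> \<bar>selection_deviation (N div B) (\<lambda>u. batch u \<omega>) n T\<bar>}
           \<le> 2 * exp (-2 * \<epsilon>\<^sup>2 / real T)"
proof -
  interpret prob_space M
    using rs by (simp add: random_sampling_def)
  have indep: "indep_vars (\<lambda>_. count_space UNIV) batch UNIV"
    using rs by (simp add: random_sampling_def)
  define K where "K = N div B"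
  have K: "K > 0"
    using B n by (auto simp: K_def div_greater_zero_iff dvd_imp_le)
  define X where "X u = (\<lambda>\<omega>. of_bool (n \<in> batch u \<omega>) - 1 / real K)" for u
  interpret Hoeffding_ineq M "{1..T}" X "\<lambda>_. - 1 / real K" "\<lambda>_. 1 - 1 / real K" "\<Sum>u\<in>{1..T}. expectation (X u)"
  proof unfold_locales
    show "indep_vars (\<lambda>_. borel) X {1..T}"
      unfolding X_def by (rule indep_vars_subset[OF indep_vars_compose2[OF indep]]) auto
    show "AE \<omega> in M. X u \<omega> \<in> {- 1 / real K..1 - 1 / real K}" for u
      using K by (intro AE_I2) (auto simp: X_def)
  qed simp_all
  have "prob {\<omega>\<in>space M. \<epsilon> \<le> \<bar>(\<Sum>u\<in>{1..T}. X u \<omega>) - (\<Sum>u\<in>{1..T}. expectation (X u))\<bar>}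
          \<le> 2 * exp (-2 * \<epsilon>\<^sup>2 / (\<Sum>u\<in>{1..T}. (1 - 1 / real K - (- 1 / real K))\<^sup>2))"
    using \<open>T \<ge> 1\<close> \<open>\<epsilon> \<ge> 0\<close> by (intro Hoeffding_ineq_abs_ge) auto
  then show ?thesis
    using expectation_centered_selection[OF rs B n]
    by (simp add: X_def selection_deviation_def K_def)
qed

lemma selection_deviation_eventually_lt_powr:
  assumes rs: "random_sampling M N B batch" and B: "0 < B" "B dvd N" and n: "n \<in> {1..N}" and b: "b > 1/2"
  shows "AE \<omega> in M. eventually (\<lambda>T. \<bar>selection_deviation (N div B) (\<lambda>u. batch u \<omega>) n T\<bar> < real T powr b) at_top"
proof -
  interpret prob_space M
    using rs by (simp add: random_sampling_def)
  have batch_measurable: "\<And>u. batch u \<in> measurable M (count_space UNIV)"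
    using rs by (simp add: random_sampling_def)
  define A where
    "A T = {\<omega>\<in>space M. real T powr b \<le> \<bar>selection_deviation (N div B) (\<lambda>u. batch u \<omega>) n T\<bar>}" for T
  have "(\<lambda>\<omega>. selection_deviation (N div B) (\<lambda>u. batch u \<omega>) n T) \<in> borel_measurable M" for T
    unfolding selection_deviation_def
    by (intro borel_measurable_sum borel_measurable_diff measurable_compose[OF batch_measurable]) simp_all
  then have A_events: "A T \<in> events" for T
    unfolding A_def by measurable
  have "measure M (A T) \<le> 2 * exp (-2 * (real T powr b)\<^sup>2 / real T)" if "T \<ge> 1" for T
    unfolding A_def using selection_deviation_hoeffding[OF rs B n that, of "real T powr b"] by simp
  then have "(\<lambda>T. measure M (A T)) \<in> O(\<lambda>T. 2 * exp (-2 * (real T powr b)\<^sup>2 / real T))"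
    by (intro bigoI[where c = 1] eventually_mono[OF eventually_ge_at_top[of 1]]) simp
  also have "(\<lambda>T. 2 * exp (-2 * (real T powr b)\<^sup>2 / real T)) \<in> O(\<lambda>T. real T powr (-2))"
    using b by real_asymp
  finally have "summable (\<lambda>T. measure M (A T))"
    by (rule summable_comparison_test_bigo[rotated]) (simp add: summable_real_powr_iff)
  then have "AE \<omega> in M. eventually (\<lambda>T. \<omega> \<in> space M - A T) at_top"
    using A_events by (intro borel_cantelli_AE1) (simp_all add: less_top[symmetric])
  then show ?thesis
    by (rule AE_mp) (auto intro!: AE_I2 elim!: eventually_mono simp: A_def)
qed

lemma selection_deviation_bigo_random:
  assumes rs: "random_sampling M N B batch" and B: "0 < B" "B dvd N" and n: "n \<in> {1..N}"
  shows "AE \<omega> in M. \<forall>a>1/2. (\<lambda>T. selection_deviation (N div B) (\<lambda>u. batch u \<omega>) n T) \<in> O(\<lambda>T. real T powr a)"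
proof -
  have "AE \<omega> in M. \<forall>j. eventually (\<lambda>T. \<bar>selection_deviation (N div B) (\<lambda>u. batch u \<omega>) n T\<bar>
                                         < real T powr (1/2 + 1 / real (Suc j))) at_top"
    using selection_deviation_eventually_lt_powr[OF rs B n] by (simp add: AE_all_countable)
  then show ?thesis
  proof (rule eventually_mono)
    fix \<omega> assume lt_powr: "\<forall>j. eventually (\<lambda>T. \<bar>selection_deviation (N div B) (\<lambda>u. batch u \<omega>) n T\<bar>
                                                 < real T powr (1/2 + 1 / real (Suc j))) at_top"
    show "\<forall>a>1/2. (\<lambda>T. selection_deviation (N div B) (\<lambda>u. batch u \<omega>) n T) \<in> O(\<lambda>T. real T powr a)"
    proof (intro allI impI)
      fix a :: real assume "a > 1/2"
      then obtain j where j: "1 / real (Suc j) < a - 1/2"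
        using reals_Archimedean[of "a - 1/2"] by (auto simp: inverse_eq_divide)
      have "(\<lambda>T. selection_deviation (N div B) (\<lambda>u. batch u \<omega>) n T) \<in> O(\<lambda>T. real T powr (1/2 + 1 / real (Suc j)))"
        using lt_powr[rule_format, of j] by (intro bigoI[where c = 1]) (auto elim!: eventually_mono)
      also have "(\<lambda>T. real T powr (1/2 + 1 / real (Suc j))) \<in> O(\<lambda>T. real T powr a)"
        using j by (subst powr_bigo_iff) (auto intro: filterlim_real_sequentially)
      finally show "(\<lambda>T. selection_deviation (N div B) (\<lambda>u. batch u \<omega>) n T) \<in> O(\<lambda>T. real T powr a)" .
    qed
  qed
qed

theorem lemma5:
  fixes N B :: nat and x :: "nat \<Rightarrow> real^'d" and wh :: "real^'d" and \<alpha> :: "nat \<Rightarrow> real"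
  assumes "0 < N"
    and sep: "strictly_linearly_separable N x"
    and wh: "is_max_margin N x wh"
    and alpha_nonneg: "\<forall>n\<in>support_set N x wh. \<alpha> n \<ge> 0"
    and dual: "wh = (\<Sum>n\<in>support_set N x wh. \<alpha> n *\<^sub>R x n)"
    and "0 < B" and "B dvd N"
  shows "(\<forall>bs. without_replacement N B bs \<longrightarrow>
            lemma5_concl (N div B) x wh (support_set N x wh) \<alpha> bs) \<and>
         (\<forall>(M::'w measure) batch. random_sampling M N B batch \<longrightarrow>
            (AE \<omega> in M. lemma5_concl (N div B) x wh (support_set N x wh) \<alpha> (\<lambda>u. batch u \<omega>)))"
proof -
  \<comment> \<open>only the dual representation of \<open>wh\<close> over the finite support set is needed\<close>
  define S where "S = support_set N x wh"
  have S: "S \<subseteq> {1..N}" "finite S"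
    by (auto simp: S_def support_set_def intro: finite_subset)
  have K: "N div B > 0"
    using \<open>0 < N\<close> \<open>0 < B\<close> \<open>B dvd N\<close> by (simp add: div_greater_zero_iff dvd_imp_le)
  note concl = lemma5_concl_of_selection_deviation[OF K S(2) dual[folded S_def]]
  have "lemma5_concl (N div B) x wh S \<alpha> bs" if "without_replacement N B bs" for bs
    using S \<open>0 < B\<close> \<open>B dvd N\<close> that by (intro concl selection_deviation_bigo_without_replacement) auto
  moreover have "AE \<omega> in M. lemma5_concl (N div B) x wh S \<alpha> (\<lambda>u. batch u \<omega>)"
    if "random_sampling M N B batch" for M :: "'w measure" and batch
  proof -
    have "AE \<omega> in M. \<forall>n\<in>S. \<forall>a>1/2.
            (\<lambda>T. selection_deviation (N div B) (\<lambda>u. batch u \<omega>) n T) \<in> O(\<lambda>T. real T powr a)"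
      using selection_deviation_bigo_random[OF that \<open>0 < B\<close> \<open>B dvd N\<close>] S by (subst AE_finite_all) auto
    then show ?thesis
      by (rule eventually_mono) (simp add: concl)
  qed
  ultimately show ?thesis
    unfolding S_def by blast
qed

end
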